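(* Let $n,\lambda,\mu$ be positive integers with $\mu>\lambda$, and let $\mathcal{A}$ be a path decomposition of $\lambda K_n$. Then $\lambda K_n$ is $2$-extendible with respect to $(\mathcal{A},\mu K_n)$ if and only if $2|\mathcal{S}_0(\mathcal{A})|+|\mathcal{S}_1(\mathcal{A})|\le(\mu-\lambda)\frac{n(n-1)}{2}$.
   Context: Graphs may have multiple edges. $\lambda K_n$ is the loopless multigraph on $n$ vertices with every pair of distinct vertices joined by exactly $\lambda$ edges; $\lambda K_n$ is regarded as a subgraph of $\mu K_n$ on the same vertex set, and $\mu K_n\setminus\lambda K_n$ denotes the graph obtained by deleting the edges of $\lambda K_n$. A decomposition of size $k$ of a graph $G$ is an ordered $k$-tuple $(G(1),\dots,G(k))$ of spanning subgraphs of $G$ (colour classes; possibly edgeless) with pairwise disjoint edge sets whose union is $E(G)$. A path decomposition is one in which every colour class is a vertex-disjoint union of paths and cycles (two parallel edges form a cycle of length 2). $\mathcal{S}_i(\mathcal{A})$ is the set of colour classes of $\mathcal{A}$ with exactly $i$ edges. For a graph $G\subseteq H$, a path decomposition $\mathcal{A}$ of $G$ with $k$ colour classes and a positive integer $\alpha$, $G$ is $\alpha$-extendible with respect to $(\mathcal{A},H)$ if there is a graph $F\subseteq H\setminus G$ and a path decomposition $\mathcal{A}^*$ of $G\cup F$ of size $k$ whose restriction to $G$ is $\mathcal{A}$ and each $\mathcal{A}^*(i)$ has at least $\alpha$ edges. *)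

theory Defs
  imports Main
begin

text \<open>Edges of the multigraph mu K_n on vertex set {0..<n}: triples (u,v,j) with
  u < v < n and j < mu (the j-th of the mu parallel edges between u and v).
  lambda K_n is the subgraph consisting of the edges with j < lambda.
  A graph (on the fixed vertex set {0..<n}) is represented by its edge set.\<close>

definition KE :: "nat \<Rightarrow> nat \<Rightarrow> (nat \<times> nat \<times> nat) set" where
  "KE n m = {(u, v, j). u < v \<and> v < n \<and> j < m}"

definition endpoints :: "nat \<times> nat \<times> nat \<Rightarrow> nat set" where
  "endpoints e = {fst e, fst (snd e)}"

definition verts_of :: "(nat \<times> nat \<times> nat) set \<Rightarrow> nat set" where
  "verts_of P = (\<Union>e\<in>P. endpoints e)"

definition is_path :: "(nat \<times> nat \<times> nat) set \<Rightarrow> bool" where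
  "is_path P \<longleftrightarrow> (\<exists>vs es. length vs \<ge> 2 \<and> distinct vs \<and> length es = length vs - 1 \<and>
      distinct es \<and> set es = P \<and>
      (\<forall>i<length es. endpoints (es ! i) = {vs ! i, vs ! Suc i}))"

text \<open>A cycle of length m \<ge> 2 (two parallel edges form a cycle of length 2).\<close>
definition is_cycle :: "(nat \<times> nat \<times> nat) set \<Rightarrow> bool" where
  "is_cycle P \<longleftrightarrow> (\<exists>vs es. length vs \<ge> 2 \<and> distinct vs \<and> length es = length vs \<and>
      distinct es \<and> set es = P \<and>
      (\<forall>i<length es. endpoints (es ! i) = {vs ! i, vs ! (Suc i mod length vs)}))"

definition paths_and_cycles :: "(nat \<times> nat \<times> nat) set \<Rightarrow> bool" where
  "paths_and_cycles C \<longleftrightarrow> (\<exists>\<P>. \<Union>\<P> = C \<and> (\<forall>P\<in>\<P>. is_path P \<or> is_cycle P) \<and>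
      (\<forall>P\<in>\<P>. \<forall>Q\<in>\<P>. P \<noteq> Q \<longrightarrow> verts_of P \<inter> verts_of Q = {}))"

definition is_decomp :: "(nat \<times> nat \<times> nat) set \<Rightarrow> (nat \<times> nat \<times> nat) set list \<Rightarrow> bool" where
  "is_decomp G A \<longleftrightarrow> (\<forall>i<length A. \<forall>j<length A. i \<noteq> j \<longrightarrow> A ! i \<inter> A ! j = {}) \<and>
      \<Union>(set A) = G"

definition path_decomp :: "(nat \<times> nat \<times> nat) set \<Rightarrow> (nat \<times> nat \<times> nat) set list \<Rightarrow> bool" where
  "path_decomp G A \<longleftrightarrow> is_decomp G A \<and> (\<forall>i<length A. paths_and_cycles (A ! i))"

definition S :: "nat \<Rightarrow> (nat \<times> nat \<times> nat) set list \<Rightarrow> nat set" where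
  "S i A = {j. j < length A \<and> card (A ! j) = i}"

definition extendible ::
  "nat \<Rightarrow> (nat \<times> nat \<times> nat) set \<Rightarrow> (nat \<times> nat \<times> nat) set list \<Rightarrow> (nat \<times> nat \<times> nat) set \<Rightarrow> bool" where
  "extendible \<alpha> G A H \<longleftrightarrow> (\<exists>F A'. F \<subseteq> H - G \<and> path_decomp (G \<union> F) A' \<and>
      length A' = length A \<and> (\<forall>i<length A. A' ! i \<inter> G = A ! i) \<and>
      (\<forall>i<length A. card (A' ! i) \<ge> \<alpha>))"

end

theory Submission
  imports Defs
begin

text \<open>Extending a colour class of \<open>i < 2\<close> edges to at least two edges costs \<open>2 - i\<close> new edges,
  and new edges of different classes are distinct; this gives the necessity of the inequality.
  Conversely, any two edges of \<open>\<mu>K\<^sub>n\<close> form a path, two disjoint paths or a 2-cycle, so a class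
  with fewer than two edges stays a union of paths and cycles after topping it up to exactly
  two edges with unused edges of \<open>\<mu>K\<^sub>n \ \<lambda>K\<^sub>n\<close>; the inequality says there are enough of them.\<close>

lemma extendible_imp_sum_deficit_le:
  assumes "extendible \<alpha> G A H" and "finite G" and "finite H"
  shows "(\<Sum>i<length A. \<alpha> - card (A ! i)) \<le> card (H - G)"
proof -
  obtain F A' where F: "F \<subseteq> H - G" and pd: "path_decomp (G \<union> F) A'"
    and len: "length A' = length A" and restr: "\<And>i. i < length A \<Longrightarrow> A' ! i \<inter> G = A ! i"
    and big: "\<And>i. i < length A \<Longrightarrow> \<alpha> \<le> card (A' ! i)"
    using assms(1) unfolding extendible_def by blast
  have disj: "\<And>i j. i < length A \<Longrightarrow> j < length A \<Longrightarrow> i \<noteq> j \<Longrightarrow> A' ! i \<inter> A' ! j = {}"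
    and sub: "\<And>i. i < length A \<Longrightarrow> A' ! i \<subseteq> G \<union> F"
    using pd len by (auto simp: path_decomp_def is_decomp_def)
  have fin: "finite (A' ! i)" if "i < length A" for i
    using sub[OF that] F assms(2,3) by (meson Diff_subset finite_UnI finite_subset)
  have deficit: "\<alpha> - card (A ! i) \<le> card (A' ! i - G)" if "i < length A" for i
  proof -
    have "A' ! i = A ! i \<union> (A' ! i - G)" and "A ! i \<inter> (A' ! i - G) = {}"
      using restr[OF that] by blast+
    then have "card (A' ! i) = card (A ! i) + card (A' ! i - G)"
      using fin[OF that] by (metis card_Un_disjoint finite_Un)
    then show ?thesis using big[OF that] by simp
  qed
  have "(\<Sum>i<length A. \<alpha> - card (A ! i)) \<le> (\<Sum>i<length A. card (A' ! i - G))"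
    by (rule sum_mono) (simp add: deficit)
  also have "\<dots> = card (\<Union>i<length A. A' ! i - G)"
    by (rule card_UN_disjoint[symmetric]) (use fin disj in auto)
  also have "\<dots> \<le> card (H - G)"
    by (rule card_mono) (use assms(3) sub F in auto)
  finally show ?thesis .
qed

lemma ex_disjoint_subsets_with_card:
  fixes k :: nat
  assumes "finite X" and "(\<Sum>i<k. c i) \<le> card X"
  shows "\<exists>B. (\<forall>i<k. B i \<subseteq> X \<and> card (B i) = c i) \<and>
    (\<forall>i<k. \<forall>j<k. i \<noteq> j \<longrightarrow> B i \<inter> B j = {})"
  using assms(2)
proof (induction k)
  case 0
  then show ?case by simp
next
  case (Suc k)
  then have le: "(\<Sum>i<k. c i) + c k \<le> card X" by simp
  then have "(\<Sum>i<k. c i) \<le> card X" by simp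
  then obtain B where B: "\<forall>i<k. B i \<subseteq> X \<and> card (B i) = c i"
    and disj: "\<forall>i<k. \<forall>j<k. i \<noteq> j \<longrightarrow> B i \<inter> B j = {}"
    by (rule Suc.IH[THEN exE]) blast
  let ?U = "\<Union>i<k. B i"
  have "?U \<subseteq> X" using B by blast
  then have finU: "finite ?U" using assms(1) by (rule finite_subset)
  have "card ?U = (\<Sum>i<k. card (B i))"
    by (rule card_UN_disjoint) (use finU disj in auto)
  also have "\<dots> = (\<Sum>i<k. c i)" using B by simp
  finally have "c k \<le> card X - card ?U"
    using le by linarith
  also have "\<dots> = card (X - ?U)"
    using card_Diff_subset[OF finU \<open>?U \<subseteq> X\<close>] by simp
  finally obtain Bk where Bk: "Bk \<subseteq> X - ?U" "card Bk = c k"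
    by (meson obtain_subset_with_card_n)
  have "\<forall>i<Suc k. (B(k := Bk)) i \<subseteq> X \<and> card ((B(k := Bk)) i) = c i"
    using B Bk by (auto simp: less_Suc_eq)
  moreover have "\<forall>i<Suc k. \<forall>j<Suc k. i \<noteq> j \<longrightarrow> (B(k := Bk)) i \<inter> (B(k := Bk)) j = {}"
    using disj Bk by (auto simp: less_Suc_eq)
  ultimately show ?case by blast
qed

lemma path_decomp_map_Un:
  assumes pd: "path_decomp G A"
    and BG: "\<And>i. i < length A \<Longrightarrow> B i \<inter> G = {}"
    and disjB: "\<And>i j. i < length A \<Longrightarrow> j < length A \<Longrightarrow> i \<noteq> j \<Longrightarrow> B i \<inter> B j = {}"
    and pc: "\<And>i. i < length A \<Longrightarrow> paths_and_cycles (A ! i \<union> B i)"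
  shows "path_decomp (G \<union> (\<Union>i<length A. B i)) (map (\<lambda>i. A ! i \<union> B i) [0..<length A])"
  unfolding path_decomp_def is_decomp_def
proof (intro conjI allI impI)
  let ?k = "length A"
  have disjA: "\<And>i j. i < ?k \<Longrightarrow> j < ?k \<Longrightarrow> i \<noteq> j \<Longrightarrow> A ! i \<inter> A ! j = {}"
    and unA: "\<Union>(set A) = G"
    using pd by (auto simp: path_decomp_def is_decomp_def)
  have AG: "A ! i \<subseteq> G" if "i < ?k" for i using unA that nth_mem by blast
  show "map (\<lambda>i. A ! i \<union> B i) [0..<?k] ! i \<inter> map (\<lambda>i. A ! i \<union> B i) [0..<?k] ! j = {}"
    if "i < length (map (\<lambda>i. A ! i \<union> B i) [0..<?k])"
      "j < length (map (\<lambda>i. A ! i \<union> B i) [0..<?k])" "i \<noteq> j" for i j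
  proof -
    have ij: "i < ?k" "j < ?k" using that by simp_all
    show ?thesis
      using disjA[OF ij that(3)] disjB[OF ij that(3)] AG[OF ij(1)] AG[OF ij(2)] BG[OF ij(1)] BG[OF ij(2)]
      by (auto simp: ij)
  qed
  have "G = (\<Union>i<?k. A ! i)"
    using unA by (metis atLeast0LessThan list.set_map map_nth set_upt)
  then show "\<Union>(set (map (\<lambda>i. A ! i \<union> B i) [0..<?k])) = G \<union> (\<Union>i<?k. B i)"
    by (auto simp: atLeast0LessThan)
  show "paths_and_cycles (map (\<lambda>i. A ! i \<union> B i) [0..<?k] ! i)"
    if "i < length (map (\<lambda>i. A ! i \<union> B i) [0..<?k])" for i
    using pc that by simp
qed

lemma extendible_2_if_sum_deficit_le:
  assumes pd: "path_decomp G A" and "finite H" and "G \<subseteq> H"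
    and two_edges: "\<And>P. P \<subseteq> H \<Longrightarrow> card P = 2 \<Longrightarrow> paths_and_cycles P"
    and le: "(\<Sum>i<length A. 2 - card (A ! i)) \<le> card (H - G)"
  shows "extendible 2 G A H"
proof -
  let ?k = "length A" and ?c = "\<lambda>i. 2 - card (A ! i)"
  have "finite (H - G)" using \<open>finite H\<close> by simp
  from ex_disjoint_subsets_with_card[OF this le] obtain B
    where B: "\<forall>i<?k. B i \<subseteq> H - G \<and> card (B i) = ?c i"
      and disjB: "\<forall>i<?k. \<forall>j<?k. i \<noteq> j \<longrightarrow> B i \<inter> B j = {}"
    by blast
  have BHG: "B i \<subseteq> H - G" and cardB: "card (B i) = ?c i" if "i < ?k" for i
    using B that by auto
  have finB: "finite (B i)" if "i < ?k" for i
    using BHG[OF that] \<open>finite (H - G)\<close> by (rule finite_subset)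
  have AG: "A ! i \<subseteq> G" if "i < ?k" for i
    using pd that nth_mem by (fastforce simp: path_decomp_def is_decomp_def)
  have card_Un: "card (A ! i \<union> B i) = card (A ! i) + ?c i" if "i < ?k" for i
  proof -
    have "finite (A ! i)"
      using AG[OF that] \<open>G \<subseteq> H\<close> \<open>finite H\<close> by (meson finite_subset)
    moreover have "A ! i \<inter> B i = {}" using AG[OF that] BHG[OF that] by blast
    ultimately show ?thesis
      using finB[OF that] cardB[OF that] by (simp add: card_Un_disjoint)
  qed
  have pc: "paths_and_cycles (A ! i \<union> B i)" if "i < ?k" for i
  proof (cases "card (A ! i) < 2")
    case True
    have "A ! i \<union> B i \<subseteq> H" using AG[OF that] BHG[OF that] \<open>G \<subseteq> H\<close> by blast
    moreover have "card (A ! i \<union> B i) = 2" using True card_Un[OF that] by simp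
    ultimately show ?thesis by (rule two_edges)
  next
    case False
    then have "B i = {}" using cardB[OF that] finB[OF that] by simp
    then show ?thesis using that pd by (simp add: path_decomp_def)
  qed
  have "path_decomp (G \<union> (\<Union>i<?k. B i)) (map (\<lambda>i. A ! i \<union> B i) [0..<?k])"
    by (rule path_decomp_map_Un[OF pd _ _ pc]) (use BHG disjB in auto)
  moreover have "(\<Union>i<?k. B i) \<subseteq> H - G" using BHG by blast
  moreover have "(A ! i \<union> B i) \<inter> G = A ! i" if "i < ?k" for i
    using AG[OF that] BHG[OF that] by blast
  moreover have "2 \<le> card (A ! i \<union> B i)" if "i < ?k" for i
    using card_Un[OF that] by simp
  ultimately show ?thesis
    unfolding extendible_def by (intro exI[of _ "\<Union>i<?k. B i"] exI[of _ "map (\<lambda>i. A ! i \<union> B i) [0..<?k]"]) auto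
qed

lemma extendible_2_iff_sum_deficit_le:
  assumes "path_decomp G A" and "finite H" and "G \<subseteq> H"
    and "\<And>P. P \<subseteq> H \<Longrightarrow> card P = 2 \<Longrightarrow> paths_and_cycles P"
  shows "extendible 2 G A H \<longleftrightarrow> (\<Sum>i<length A. 2 - card (A ! i)) \<le> card (H - G)"
  using assms extendible_imp_sum_deficit_le extendible_2_if_sum_deficit_le
  by (meson finite_subset)

lemma is_path_edge: "endpoints e = {x, y} \<Longrightarrow> x \<noteq> y \<Longrightarrow> is_path {e}"
  unfolding is_path_def by (rule exI[of _ "[x, y]"], rule exI[of _ "[e]"]) auto

lemma is_path_two_edges:
  assumes "e \<noteq> e'" "endpoints e = {x, y}" "endpoints e' = {y, z}" "distinct [x, y, z]"
  shows "is_path {e, e'}"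
  unfolding is_path_def
  by (rule exI[of _ "[x, y, z]"], rule exI[of _ "[e, e']"]) (use assms in \<open>auto simp: less_Suc_eq\<close>)

lemma is_cycle_parallel_edges:
  assumes "e \<noteq> e'" "endpoints e = {x, y}" "endpoints e' = {x, y}" "x \<noteq> y"
  shows "is_cycle {e, e'}"
  unfolding is_cycle_def
  by (rule exI[of _ "[x, y]"], rule exI[of _ "[e, e']"])
    (use assms in \<open>auto simp: less_Suc_eq insert_commute\<close>)

lemma paths_and_cycles_if_path_or_cycle: "is_path P \<or> is_cycle P \<Longrightarrow> paths_and_cycles P"
  unfolding paths_and_cycles_def by (rule exI[of _ "{P}"]) auto

lemma pairs_sharing_one_element:
  assumes "a \<noteq> b" "c \<noteq> d" "{a, b} \<noteq> {c, d}" "{a, b} \<inter> {c, d} \<noteq> {}"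
  obtains x y z where "{a, b} = {x, y}" "{c, d} = {y, z}" "distinct [x, y, z]"
proof -
  consider "a = c" | "a = d" | "b = c" | "b = d" using assms(4) by auto
  then show thesis
  proof cases
    case 1 then show thesis using assms by (intro that[of b a d]) auto
  next
    case 2 then show thesis using assms by (intro that[of b a c]) auto
  next
    case 3 then show thesis using assms by (intro that[of a b d]) auto
  next
    case 4 then show thesis using assms by (intro that[of a b c]) auto
  qed
qed

lemma paths_and_cycles_two_edges:
  assumes "card P = 2" and loopless: "\<And>e. e \<in> P \<Longrightarrow> fst e \<noteq> fst (snd e)"
  shows "paths_and_cycles P"
proof -
  obtain e e' where P: "P = {e, e'}" and "e \<noteq> e'"
    using assms(1) by (auto simp: card_2_iff)
  obtain a b c d where ab: "endpoints e = {a, b}" "a \<noteq> b" and cd: "endpoints e' = {c, d}" "c \<noteq> d"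
    using loopless P by (auto simp: endpoints_def)
  show ?thesis
  proof (cases "{a, b} = {c, d}")
    case True
    then show ?thesis unfolding P
      using is_cycle_parallel_edges[OF \<open>e \<noteq> e'\<close>] ab cd paths_and_cycles_if_path_or_cycle by metis
  next
    case distinct: False
    show ?thesis
    proof (cases "{a, b} \<inter> {c, d} = {}")
      case True
      show ?thesis unfolding paths_and_cycles_def
        by (rule exI[of _ "{{e}, {e'}}"])
          (use P True ab cd is_path_edge in \<open>auto simp: verts_of_def\<close>)
    next
      case False
      then obtain x y z where "{a, b} = {x, y}" "{c, d} = {y, z}" "distinct [x, y, z]"
        using pairs_sharing_one_element ab(2) cd(2) distinct by metis
      then show ?thesis unfolding P
        using is_path_two_edges[OF \<open>e \<noteq> e'\<close>] ab cd paths_and_cycles_if_path_or_cycle by metis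
    qed
  qed
qed

lemma finite_KE: "finite (KE n m)"
  by (rule finite_subset[of _ "{..<n} \<times> {..<n} \<times> {..<m}"]) (auto simp: KE_def)

lemma KE_mono: "l \<le> m \<Longrightarrow> KE n l \<subseteq> KE n m"
  by (auto simp: KE_def)

lemma card_KE: "card (KE n m) = m * (n * (n - 1) div 2)"
proof (induction n)
  case 0
  have "KE 0 m = {}" by (auto simp: KE_def)
  then show ?case by simp
next
  case (Suc n)
  have "KE (Suc n) m = KE n m \<union> {..<n} \<times> {n} \<times> {..<m}"
    and "KE n m \<inter> {..<n} \<times> {n} \<times> {..<m} = {}"
    by (auto simp: KE_def)
  then have "card (KE (Suc n) m) = card (KE n m) + n * m"
    by (simp add: card_Un_disjoint finite_KE card_cartesian_product)
  moreover have "n * (n - 1) div 2 + n = Suc n * n div 2"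
    by (cases n) (auto simp: algebra_simps)
  ultimately show ?case
    using Suc.IH by (metis add_mult_distrib2 mult.commute diff_Suc_1)
qed

lemma card_KE_diff: "l \<le> m \<Longrightarrow> card (KE n m - KE n l) = (m - l) * (n * (n - 1) div 2)"
  by (simp add: card_Diff_subset finite_KE card_KE KE_mono diff_mult_distrib)

lemma paths_and_cycles_two_KE_edges: "P \<subseteq> KE n m \<Longrightarrow> card P = 2 \<Longrightarrow> paths_and_cycles P"
  by (rule paths_and_cycles_two_edges) (auto simp: KE_def)

lemma sum_two_minus_card_eq_S:
  "(\<Sum>i<length A. 2 - card (A ! i)) = 2 * card (S 0 A) + card (S 1 A)"
proof -
  let ?f = "\<lambda>i. 2 - card (A ! i)"
  have "(\<Sum>i<length A. ?f i) = (\<Sum>i\<in>S 0 A \<union> S 1 A. ?f i)"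
    by (rule sum.mono_neutral_right) (auto simp: S_def)
  also have "\<dots> = (\<Sum>i\<in>S 0 A. ?f i) + (\<Sum>i\<in>S 1 A. ?f i)"
    by (rule sum.union_disjoint) (auto simp: S_def)
  also have "(\<Sum>i\<in>S 0 A. ?f i) = (\<Sum>i\<in>S 0 A. 2)"
    by (rule sum.cong) (auto simp: S_def)
  also have "(\<Sum>i\<in>S 1 A. ?f i) = (\<Sum>i\<in>S 1 A. 1)"
    by (rule sum.cong) (auto simp: S_def)
  finally show ?thesis by simp
qed

theorem proposition3:
  fixes n lam mu :: nat and A :: "(nat \<times> nat \<times> nat) set list"
  assumes "n > 0" and "lam > 0" and "mu > lam"
    and "path_decomp (KE n lam) A"
  shows "extendible 2 (KE n lam) A (KE n mu) \<longleftrightarrow>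
         2 * card (S 0 A) + card (S 1 A) \<le> (mu - lam) * (n * (n - 1) div 2)"
proof -
  have "lam \<le> mu" using assms(3) by simp
  then have "extendible 2 (KE n lam) A (KE n mu) \<longleftrightarrow>
      (\<Sum>i<length A. 2 - card (A ! i)) \<le> card (KE n mu - KE n lam)"
    by (intro extendible_2_iff_sum_deficit_le assms(4) finite_KE KE_mono
        paths_and_cycles_two_KE_edges)
  then show ?thesis
    using \<open>lam \<le> mu\<close> by (simp add: sum_two_minus_card_eq_S card_KE_diff)
qed

end
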